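(* Let $K$ be a compact scattered space. If a space $X$ is regular and $K$-selective, then every open subspace of $X$ is $K$-selective.
   Context: All spaces are assumed $T_1$. A space is scattered if every nonempty subspace has an isolated point. For spaces $Y$, $X$, a map $\varphi:Y\to\mathcal P(X)\setminus\{\emptyset\}$ is lower semicontinuous (l.s.c.) if $\{y:\varphi(y)\cap U\neq\emptyset\}$ is open in $Y$ for every open $U\subseteq X$; a selection is a map $f:Y\to X$ with $f(y)\in\varphi(y)$ for all $y$. $X$ is $Y$-selective if every l.s.c. map from $Y$ to the nonempty closed subsets of $X$ has a continuous selection. *)

theory Defs
  imports "HOL-Analysis.Analysis"
begin

definition scattered_space :: "'a topology \<Rightarrow> bool" where
  "scattered_space Y \<longleftrightarrow>
     (\<forall>S. S \<subseteq> topspace Y \<and> S \<noteq> {} \<longrightarrow>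
        (\<exists>x\<in>S. \<exists>U. openin Y U \<and> U \<inter> S = {x}))"

definition lsc_map :: "'a topology \<Rightarrow> 'b topology \<Rightarrow> ('a \<Rightarrow> 'b set) \<Rightarrow> bool" where
  "lsc_map Y X \<phi> \<longleftrightarrow>
     (\<forall>y\<in>topspace Y. \<phi> y \<subseteq> topspace X \<and> \<phi> y \<noteq> {}) \<and>
     (\<forall>U. openin X U \<longrightarrow> openin Y {y \<in> topspace Y. \<phi> y \<inter> U \<noteq> {}})"

text \<open>X is Y-selective: every l.s.c. map from Y to the nonempty closed subsets of X
  has a continuous selection.\<close>
definition selective :: "'a topology \<Rightarrow> 'b topology \<Rightarrow> bool" where
  "selective Y X \<longleftrightarrow>
     (\<forall>\<phi>. lsc_map Y X \<phi> \<and> (\<forall>y\<in>topspace Y. closedin X (\<phi> y)) \<longrightarrow>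
        (\<exists>f. continuous_map Y X f \<and> (\<forall>y\<in>topspace Y. f y \<in> \<phi> y)))"

end

theory Submission
  imports Defs
begin

text \<open>Compactness of \<open>K\<close> and regularity of \<open>X\<close> are all that is needed. Given an l.s.c. map \<open>\<phi>\<close> into the nonempty closed subsets of an open \<open>U \<subseteq> X\<close>,
  regularity and compactness give an open \<open>V\<close> with \<open>X closure_of V \<subseteq> U\<close> meeting every \<open>\<phi> y\<close>.
  The map \<open>y \<mapsto> X closure_of (\<phi> y \<inter> V)\<close> is l.s.c. with closed values in \<open>X\<close>, so it has a
  continuous selection; its values lie in \<open>U\<close>, and there inside \<open>\<phi> y\<close> because \<open>\<phi> y\<close> is
  closed in \<open>U\<close>.\<close>

lemma regular_space_open_closure_of_subset:
  assumes "regular_space X" "openin X U" "x \<in> U"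
  obtains V where "openin X V" "x \<in> V" "X closure_of V \<subseteq> U"
proof -
  have "closedin X (topspace X - U)" "x \<in> topspace X - (topspace X - U)"
    using assms(2,3) openin_subset by fastforce+
  then obtain V where "openin X V" "x \<in> V" "disjnt (topspace X - U) (X closure_of V)"
    using assms(1) unfolding regular_space by blast
  moreover have "X closure_of V \<subseteq> topspace X"
    by (rule closure_of_subset_topspace)
  ultimately have "X closure_of V \<subseteq> U"
    by (auto simp: disjnt_iff)
  with \<open>openin X V\<close> \<open>x \<in> V\<close> show thesis
    using that by blast
qed

lemma lsc_map_from_subtopology:
  assumes "lsc_map Y (subtopology X U) \<phi>"
  shows "lsc_map Y X \<phi>"
  unfolding lsc_map_def
proof (intro conjI ballI allI impI)
  fix y assume "y \<in> topspace Y"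
  then show "\<phi> y \<subseteq> topspace X" "\<phi> y \<noteq> {}"
    using assms unfolding lsc_map_def by auto
next
  fix H assume "openin X H"
  then have "openin (subtopology X U) (U \<inter> H)"
    by (auto simp: openin_subtopology)
  moreover have "\<phi> y \<inter> (U \<inter> H) = \<phi> y \<inter> H" if "y \<in> topspace Y" for y
    using assms that unfolding lsc_map_def by auto
  ultimately show "openin Y {y \<in> topspace Y. \<phi> y \<inter> H \<noteq> {}}"
    using assms unfolding lsc_map_def
    by (smt (verit, best) Collect_cong)
qed

lemma compact_lsc_map_meets_open_with_closure_of_subset:
  assumes K: "compact_space K" and X: "regular_space X" "openin X U"
    and \<phi>: "lsc_map K X \<phi>" "\<And>y. y \<in> topspace K \<Longrightarrow> \<phi> y \<subseteq> U"
  obtains V where "openin X V" "X closure_of V \<subseteq> U"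
    "\<And>y. y \<in> topspace K \<Longrightarrow> \<phi> y \<inter> V \<noteq> {}"
proof -
  define \<V> where "\<V> = {V. openin X V \<and> X closure_of V \<subseteq> U}"
  define hits where "hits V = {y \<in> topspace K. \<phi> y \<inter> V \<noteq> {}}" for V
  have "topspace K \<subseteq> \<Union>(hits ` \<V>)"
  proof
    fix y assume y: "y \<in> topspace K"
    then obtain x where x: "x \<in> \<phi> y"
      using \<phi>(1) unfolding lsc_map_def by blast
    then obtain V where "openin X V" "x \<in> V" "X closure_of V \<subseteq> U"
      using regular_space_open_closure_of_subset[OF X] \<phi>(2)[OF y] by blast
    with x y show "y \<in> \<Union>(hits ` \<V>)"
      unfolding \<V>_def hits_def by blast
  qed
  moreover have "\<forall>S \<in> hits ` \<V>. openin K S"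
    using \<phi>(1) unfolding lsc_map_def hits_def \<V>_def by blast
  ultimately obtain \<F> where "finite \<F>" "\<F> \<subseteq> hits ` \<V>" "topspace K \<subseteq> \<Union>\<F>"
    using K unfolding compact_space_alt by meson
  then obtain \<G> where \<G>: "finite \<G>" "\<G> \<subseteq> \<V>" "topspace K \<subseteq> \<Union>(hits ` \<G>)"
    by (metis finite_subset_image)
  show thesis
  proof
    show "openin X (\<Union>\<G>)" "X closure_of \<Union>\<G> \<subseteq> U"
      using \<G>(1,2) unfolding \<V>_def by (auto simp: closure_of_Union)
    show "\<phi> y \<inter> \<Union>\<G> \<noteq> {}" if "y \<in> topspace K" for y
      using \<G>(3) that unfolding hits_def by blast
  qed
qed

lemma lsc_map_closure_of_Int_open:
  assumes "lsc_map Y X \<phi>" "openin X V" "\<And>y. y \<in> topspace Y \<Longrightarrow> \<phi> y \<inter> V \<noteq> {}"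
  shows "lsc_map Y X (\<lambda>y. X closure_of (\<phi> y \<inter> V))"
  unfolding lsc_map_def
proof (intro conjI ballI allI impI)
  fix y assume y: "y \<in> topspace Y"
  show "X closure_of (\<phi> y \<inter> V) \<subseteq> topspace X"
    by (rule closure_of_subset_topspace)
  have "\<phi> y \<inter> V \<subseteq> X closure_of (\<phi> y \<inter> V)"
    using assms(1) y unfolding lsc_map_def by (intro closure_of_subset) auto
  then show "X closure_of (\<phi> y \<inter> V) \<noteq> {}"
    using assms(3)[OF y] by blast
next
  fix H assume H: "openin X H"
  text \<open>An open set meets a closure iff it meets the set itself.\<close>
  have "X closure_of (\<phi> y \<inter> V) \<inter> H \<noteq> {} \<longleftrightarrow> \<phi> y \<inter> (V \<inter> H) \<noteq> {}" for y
    using openin_Int_closure_of_eq_empty[OF H] by (auto simp: Int_ac)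
  moreover have "openin Y {y \<in> topspace Y. \<phi> y \<inter> (V \<inter> H) \<noteq> {}}"
    using assms(1,2) H unfolding lsc_map_def by blast
  ultimately show "openin Y {y \<in> topspace Y. X closure_of (\<phi> y \<inter> V) \<inter> H \<noteq> {}}"
    by simp
qed

lemma closure_of_Int_subset_closedin_subtopology:
  assumes "closedin (subtopology X U) S" "X closure_of V \<subseteq> U"
  shows "X closure_of (S \<inter> V) \<subseteq> S"
proof -
  have "X closure_of (S \<inter> V) \<subseteq> U \<inter> X closure_of (U \<inter> S)"
    using assms(2) closure_of_mono[of "S \<inter> V" V X] closure_of_mono[of "S \<inter> V" "U \<inter> S" X]
      closedin_subset[OF assms(1)] by auto
  also have "\<dots> = S"
    using assms(1) by (simp add: closure_of_subtopology[symmetric] closure_of_closedin)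
  finally show ?thesis .
qed

theorem mainTheorem10:
  fixes K :: "'a topology" and X :: "'b topology" and U :: "'b set"
  assumes "t1_space K" and "compact_space K" and "scattered_space K"
    and "t1_space X" and "regular_space X" and "selective K X"
    and "openin X U"
  shows "selective K (subtopology X U)"
  unfolding selective_def
proof (intro allI impI)
  fix \<phi> :: "'a \<Rightarrow> 'b set"
  assume "lsc_map K (subtopology X U) \<phi> \<and> (\<forall>y\<in>topspace K. closedin (subtopology X U) (\<phi> y))"
  then have \<phi>: "lsc_map K (subtopology X U) \<phi>" "\<And>y. y \<in> topspace K \<Longrightarrow> closedin (subtopology X U) (\<phi> y)"
    by auto
  then have \<phi>U: "\<phi> y \<subseteq> U" if "y \<in> topspace K" for y
    using that closedin_subset by fastforce
  obtain V where V: "openin X V" "X closure_of V \<subseteq> U" "\<And>y. y \<in> topspace K \<Longrightarrow> \<phi> y \<inter> V \<noteq> {}"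
    using compact_lsc_map_meets_open_with_closure_of_subset[OF assms(2,5,7)
        lsc_map_from_subtopology[OF \<phi>(1)] \<phi>U] by blast
  obtain g where g: "continuous_map K X g" "\<And>y. y \<in> topspace K \<Longrightarrow> g y \<in> X closure_of (\<phi> y \<inter> V)"
    using assms(6) lsc_map_closure_of_Int_open[OF lsc_map_from_subtopology[OF \<phi>(1)] V(1,3)]
    unfolding selective_def by force
  have g\<phi>: "g y \<in> \<phi> y" if "y \<in> topspace K" for y
    using g(2) closure_of_Int_subset_closedin_subtopology[OF \<phi>(2) V(2)] that by blast
  have "continuous_map K (subtopology X U) g"
    using g(1) g\<phi> \<phi>U by (auto intro: continuous_map_into_subtopology)
  with g\<phi> show "\<exists>f. continuous_map K (subtopology X U) f \<and> (\<forall>y\<in>topspace K. f y \<in> \<phi> y)"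
    by blast
qed

end
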